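(* For every integer $s$, $$\sum_{k=1}^\infty\frac{L_{2k+s}}{4^k(2k-1)(2k)(2k+1)}=-L_s\ln 2+\frac5{16}L_{s+1}\ln 5+\frac{\sqrt5}{8}(15F_{s-1}-F_s)\ln\alpha-\frac{L_s}{2},$$ $$\sum_{k=1}^\infty\frac{F_{2k+s}}{4^k(2k-1)(2k)(2k+1)}=-F_s\ln 2+\frac5{16}F_{s+1}\ln 5+\frac{1}{8\sqrt5}(15L_{s-1}-L_s)\ln\alpha-\frac{F_s}{2}.$$
   Context: $F_n$ and $L_n$ are the Fibonacci and Lucas numbers for $n\in\mathbb Z$: $F_n=(\alpha^n-\beta^n)/(\alpha-\beta)$, $L_n=\alpha^n+\beta^n$, where $\alpha=(1+\sqrt5)/2$, $\beta=(1-\sqrt5)/2$. *)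

theory Defs
  imports Complex_Main
begin

definition phi_alpha :: real where "phi_alpha = (1 + sqrt 5) / 2"
definition phi_beta :: real where "phi_beta = (1 - sqrt 5) / 2"

definition fibZ :: "int \<Rightarrow> real" where
  "fibZ n = (phi_alpha powi n - phi_beta powi n) / (phi_alpha - phi_beta)"
definition lucZ :: "int \<Rightarrow> real" where
  "lucZ n = phi_alpha powi n + phi_beta powi n"

end

theory Submission
  imports Defs "HOL-Analysis.Analysis"
begin

(* Let G(x) be the sum of x^(2k) / ((2k-1) 2k (2k+1)) over k >= 1. Splitting the denominator
   into partial fractions expresses G through the series of artanh x and of -ln(1 - x^2)/2, so
   G(x) = (x + 1/x)/2 artanh x + ln(1 - x^2)/2 - 1/2 for 0 < |x| < 1. By Binet's formulas the
   two series of the theorem are alpha^s G(alpha/2) + beta^s G(beta/2) and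
   (alpha^s G(alpha/2) - beta^s G(beta/2)) / sqrt 5, and at x = alpha/2, beta/2 all logarithms
   reduce to ln 2, ln 5 and ln alpha, since 1 - (alpha/2)^2 = sqrt 5 / (4 alpha) and
   (1 + alpha/2) / (1 - alpha/2) = sqrt 5 alpha^3, and similarly for beta. *)

lemma artanh_series:
  fixes x :: real
  assumes "\<bar>x\<bar> < 1"
  shows "(\<lambda>k. x ^ (2 * k + 1) / real (2 * k + 1)) sums artanh x"
proof -
  have pos: "(1 + x) / (1 - x) > 0" using assms by simp
  have "((1 + x) / (1 - x) - 1) / ((1 + x) / (1 - x) + 1) = x"
    using assms by (simp add: field_simps)
  with ln_series_quadratic [OF pos]
  have "(\<lambda>k. 2 * (x ^ (2 * k + 1) / real (2 * k + 1))) sums (2 * artanh x)"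
    by (simp add: artanh_def)
  then show ?thesis by (subst (asm) sums_mult_iff) simp_all
qed

lemma ln_one_minus_square_series:
  fixes x :: real
  assumes "\<bar>x\<bar> < 1"
  shows "(\<lambda>k. x ^ (2 * k + 2) / real (2 * k + 2)) sums (- ln (1 - x\<^sup>2) / 2)"
proof -
  have "\<bar>- x\<^sup>2\<bar> < 1" using assms by (simp add: abs_square_less_1)
  from sums_minus [OF ln_series' [OF this]]
  have "(\<lambda>n. (x\<^sup>2) ^ n / real n) sums (- ln (1 - x\<^sup>2))" by simp
  then have "(\<lambda>n. (x\<^sup>2) ^ Suc n / real (Suc n)) sums (- ln (1 - x\<^sup>2))"
    by (subst sums_Suc_iff) simp
  moreover have "(x\<^sup>2) ^ Suc n / real (Suc n) = 2 * (x ^ (2 * n + 2) / real (2 * n + 2))" for n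
  proof -
    have "(x\<^sup>2) ^ Suc n = x ^ (2 * n + 2)" by (simp only: power_mult [symmetric]) simp
    moreover have "real (2 * n + 2) = 2 * real (Suc n)" by simp
    ultimately show ?thesis by (simp add: field_simps)
  qed
  ultimately have "(\<lambda>k. 2 * (x ^ (2 * k + 2) / real (2 * k + 2))) sums (2 * (- ln (1 - x\<^sup>2) / 2))"
    by simp
  then show ?thesis by (subst (asm) sums_mult_iff) simp_all
qed

lemma partial_fractions_three_consecutive:
  fixes m :: real
  assumes "m > 0"
  shows "1 / (m * (m + 1) * (m + 2)) = 1 / (2 * m) - 1 / (m + 1) + 1 / (2 * (m + 2))"
proof -
  have "m \<noteq> 0" "m + 1 \<noteq> 0" "m + 2 \<noteq> 0" using assms by linarith+
  then show ?thesis by (simp add: divide_simps) algebra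
qed

lemma even_power_triple_product_series:
  fixes x :: real
  assumes x: "\<bar>x\<bar> < 1" and x0: "x \<noteq> 0"
  shows "(\<lambda>k. x ^ (2 * Suc k) / ((2 * real (Suc k) - 1) * (2 * real (Suc k)) * (2 * real (Suc k) + 1)))
           sums ((x + 1 / x) / 2 * artanh x + ln (1 - x\<^sup>2) / 2 - 1 / 2)"
proof -
  have "(\<lambda>k. x ^ (2 * Suc k + 1) / real (2 * Suc k + 1)) sums (artanh x - x)"
    using sums_Suc_iff [of "\<lambda>k. x ^ (2 * k + 1) / real (2 * k + 1)"] artanh_series [OF x] by simp
  then have series: "(\<lambda>k. x / 2 * (x ^ (2 * k + 1) / real (2 * k + 1)) - x ^ (2 * k + 2) / real (2 * k + 2)
                + 1 / (2 * x) * (x ^ (2 * Suc k + 1) / real (2 * Suc k + 1)))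
      sums (x / 2 * artanh x - (- ln (1 - x\<^sup>2) / 2) + 1 / (2 * x) * (artanh x - x))"
    by (intro sums_add sums_diff sums_mult artanh_series ln_one_minus_square_series x)
  have summand_eq: "x / 2 * (x ^ (2 * k + 1) / real (2 * k + 1)) - x ^ (2 * k + 2) / real (2 * k + 2)
                + 1 / (2 * x) * (x ^ (2 * Suc k + 1) / real (2 * Suc k + 1))
      = x ^ (2 * Suc k) / ((2 * real (Suc k) - 1) * (2 * real (Suc k)) * (2 * real (Suc k) + 1))"
    (is "?lhs = _") for k
  proof -
    define m where "m = 2 * real k + 1"
    define y where "y = x ^ (2 * Suc k)"
    have "m > 0" by (simp add: m_def)
    have "x ^ (2 * k + 1) = y / x" "x ^ (2 * k + 2) = y" "x ^ (2 * Suc k + 1) = x * y"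
      using x0 by (simp_all add: y_def field_simps)
    moreover have "real (2 * k + 1) = m" "real (2 * k + 2) = m + 1" "real (2 * Suc k + 1) = m + 2"
      "2 * real (Suc k) - 1 = m" "2 * real (Suc k) = m + 1" "2 * real (Suc k) + 1 = m + 2"
      by (simp_all add: m_def)
    ultimately have "?lhs = y * (1 / (2 * m) - 1 / (m + 1) + 1 / (2 * (m + 2)))"
      using x0 by (simp add: algebra_simps)
    also have "\<dots> = y / (m * (m + 1) * (m + 2))"
      unfolding partial_fractions_three_consecutive [OF \<open>m > 0\<close>, symmetric] by simp
    finally show ?thesis
      by (simp add: y_def m_def algebra_simps)
  qed
  have limit_eq: "x / 2 * artanh x - (- ln (1 - x\<^sup>2) / 2) + 1 / (2 * x) * (artanh x - x)
      = (x + 1 / x) / 2 * artanh x + ln (1 - x\<^sup>2) / 2 - 1 / 2"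
    using x0 by (simp add: field_simps)
  show ?thesis using series unfolding summand_eq limit_eq .
qed

lemma sqrt_5_bounds: "2 < sqrt (5 :: real)" "sqrt (5 :: real) < 3"
  by (simp_all add: real_less_rsqrt real_less_lsqrt)

lemma phi_alpha_bounds: "1 < phi_alpha" "phi_alpha < 2"
  using sqrt_5_bounds by (simp_all add: phi_alpha_def)

lemma phi_beta_bounds: "-1 < phi_beta" "phi_beta < 0"
  using sqrt_5_bounds by (simp_all add: phi_beta_def)

lemma phi_alpha_plus_phi_beta: "phi_alpha + phi_beta = 1"
  by (simp add: phi_alpha_def phi_beta_def field_simps)

lemma phi_alpha_minus_phi_beta: "phi_alpha - phi_beta = sqrt 5"
  by (simp add: phi_alpha_def phi_beta_def field_simps)

lemma phi_alpha_times_phi_beta: "phi_alpha * phi_beta = -1"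
  by (simp add: phi_alpha_def phi_beta_def field_simps)

lemma phi_alpha_cube: "phi_alpha ^ 3 = 2 + sqrt 5"
  by (simp add: phi_alpha_def power3_eq_cube field_simps)

lemma ln_4: "ln 4 = 2 * ln (2 :: real)"
  using ln_realpow [of 2 2] by simp

lemma artanh_half_phi_alpha: "artanh (phi_alpha / 2) = ln 5 / 4 + 3 / 2 * ln phi_alpha"
proof -
  have "(1 + phi_alpha / 2) / (1 - phi_alpha / 2) = sqrt 5 * phi_alpha ^ 3"
    unfolding phi_alpha_cube using sqrt_5_bounds
    by (simp add: phi_alpha_def field_simps)
  then show ?thesis
    using phi_alpha_bounds by (simp add: artanh_def ln_mult ln_realpow ln_sqrt)
qed

lemma artanh_half_phi_beta: "artanh (phi_beta / 2) = ln 5 / 4 - 3 / 2 * ln phi_alpha"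
proof -
  have "(1 + phi_beta / 2) / (1 - phi_beta / 2) = sqrt 5 / phi_alpha ^ 3"
    unfolding phi_alpha_cube using sqrt_5_bounds
    by (simp add: phi_beta_def field_simps)
  then show ?thesis
    using phi_alpha_bounds by (simp add: artanh_def ln_div ln_realpow ln_sqrt)
qed

lemma ln_one_minus_half_phi_alpha_square:
  "ln (1 - (phi_alpha / 2)\<^sup>2) = ln 5 / 2 - 2 * ln 2 - ln phi_alpha"
proof -
  have eq: "1 - (phi_alpha / 2)\<^sup>2 = sqrt 5 / (4 * phi_alpha)"
    using sqrt_5_bounds by (simp add: phi_alpha_def power2_eq_square field_simps)
  show ?thesis
    unfolding eq using phi_alpha_bounds by (simp add: ln_div ln_mult ln_sqrt ln_4)
qed

lemma ln_one_minus_half_phi_beta_square: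
  "ln (1 - (phi_beta / 2)\<^sup>2) = ln 5 / 2 - 2 * ln 2 + ln phi_alpha"
proof -
  have eq: "1 - (phi_beta / 2)\<^sup>2 = sqrt 5 * phi_alpha / 4"
    using sqrt_5_bounds by (simp add: phi_alpha_def phi_beta_def power2_eq_square field_simps)
  show ?thesis
    unfolding eq using phi_alpha_bounds by (simp add: ln_div ln_mult ln_sqrt ln_4)
qed

lemma half_phi_alpha_series:
  "(\<lambda>k. (phi_alpha / 2) ^ (2 * Suc k) / ((2 * real (Suc k) - 1) * (2 * real (Suc k)) * (2 * real (Suc k) + 1)))
     sums (5 * phi_alpha / 16 * ln 5 - (15 * phi_beta + 1) / 8 * ln phi_alpha - ln 2 - 1 / 2)"
proof -
  have "\<bar>phi_alpha / 2\<bar> < 1" "phi_alpha / 2 \<noteq> 0"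
    using phi_alpha_bounds by auto
  note series = even_power_triple_product_series [OF this]
  have inverse: "1 / (phi_alpha / 2) = - 2 * phi_beta"
    using phi_alpha_times_phi_beta phi_alpha_bounds by (simp add: field_simps)
  have beta: "phi_beta = 1 - phi_alpha"
    using phi_alpha_plus_phi_beta by simp
  have limit_eq: "(phi_alpha / 2 + 1 / (phi_alpha / 2)) / 2 * artanh (phi_alpha / 2)
        + ln (1 - (phi_alpha / 2)\<^sup>2) / 2 - 1 / 2
      = 5 * phi_alpha / 16 * ln 5 - (15 * phi_beta + 1) / 8 * ln phi_alpha - ln 2 - 1 / 2"
    unfolding inverse artanh_half_phi_alpha ln_one_minus_half_phi_alpha_square
    by (simp add: beta field_simps)
  show ?thesis using series unfolding limit_eq .
qed

lemma half_phi_beta_series: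
  "(\<lambda>k. (phi_beta / 2) ^ (2 * Suc k) / ((2 * real (Suc k) - 1) * (2 * real (Suc k)) * (2 * real (Suc k) + 1)))
     sums (5 * phi_beta / 16 * ln 5 + (15 * phi_alpha + 1) / 8 * ln phi_alpha - ln 2 - 1 / 2)"
proof -
  have "\<bar>phi_beta / 2\<bar> < 1" "phi_beta / 2 \<noteq> 0"
    using phi_beta_bounds by auto
  note series = even_power_triple_product_series [OF this]
  have inverse: "1 / (phi_beta / 2) = - 2 * phi_alpha"
    using phi_alpha_times_phi_beta phi_beta_bounds by (simp add: field_simps)
  have beta: "phi_beta = 1 - phi_alpha"
    using phi_alpha_plus_phi_beta by simp
  have limit_eq: "(phi_beta / 2 + 1 / (phi_beta / 2)) / 2 * artanh (phi_beta / 2)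
        + ln (1 - (phi_beta / 2)\<^sup>2) / 2 - 1 / 2
      = 5 * phi_beta / 16 * ln 5 + (15 * phi_alpha + 1) / 8 * ln phi_alpha - ln 2 - 1 / 2"
    unfolding inverse artanh_half_phi_beta ln_one_minus_half_phi_beta_square
    by (simp add: beta field_simps)
  show ?thesis using series unfolding limit_eq .
qed

lemma powi_even_shift_div_four_power:
  fixes z :: real and s :: int
  assumes "z \<noteq> 0"
  shows "z powi (2 * int (Suc k) + s) / (4 ^ Suc k * A * B * C)
           = z powi s * ((z / 2) ^ (2 * Suc k) / (A * B * C))"
proof -
  have "z powi (2 * int (Suc k) + s) = z powi int (2 * Suc k) * z powi s"
    using assms by (simp add: power_int_add)
  also have "z powi int (2 * Suc k) = z ^ (2 * Suc k)"
    by (rule power_int_of_nat)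
  finally have "z powi (2 * int (Suc k) + s) = z ^ (2 * Suc k) * z powi s" .
  moreover have "(z / 2) ^ (2 * Suc k) = z ^ (2 * Suc k) / 4 ^ Suc k"
    by (simp add: power_divide power_mult)
  ultimately show ?thesis by (simp add: mult_ac)
qed

lemma binet_form_series:
  fixes c d :: real and s :: int and u v :: "int \<Rightarrow> real"
  assumes u: "\<And>n. u n = c * phi_alpha powi n + d * phi_beta powi n"
    and v: "\<And>n. v n = c * phi_alpha powi n - d * phi_beta powi n"
    and l: "l = - u s * ln 2 + 5 / 16 * u (s + 1) * ln 5 + (15 * v (s - 1) - v s) / 8 * ln phi_alpha - u s / 2"
  shows "(\<lambda>k. u (2 * int (Suc k) + s)
             / (4 ^ Suc k * (2 * real (Suc k) - 1) * (2 * real (Suc k)) * (2 * real (Suc k) + 1)))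
         sums l"
proof -
  define a where "a = c * phi_alpha powi s"
  define b where "b = d * phi_beta powi s"
  have "phi_alpha \<noteq> 0" "phi_beta \<noteq> 0"
    using phi_alpha_bounds phi_beta_bounds by auto
  then have summand_eq: "u (2 * int (Suc k) + s)
             / (4 ^ Suc k * (2 * real (Suc k) - 1) * (2 * real (Suc k)) * (2 * real (Suc k) + 1))
      = a * ((phi_alpha / 2) ^ (2 * Suc k) / ((2 * real (Suc k) - 1) * (2 * real (Suc k)) * (2 * real (Suc k) + 1)))
        + b * ((phi_beta / 2) ^ (2 * Suc k) / ((2 * real (Suc k) - 1) * (2 * real (Suc k)) * (2 * real (Suc k) + 1)))"
    for k
    unfolding u add_divide_distrib times_divide_eq_right [symmetric] a_def b_def
      powi_even_shift_div_four_power [OF \<open>phi_alpha \<noteq> 0\<close>] powi_even_shift_div_four_power [OF \<open>phi_beta \<noteq> 0\<close>]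
    by (simp only: mult.assoc)
  have inverse: "1 / phi_alpha = - phi_beta" "1 / phi_beta = - phi_alpha"
    using \<open>phi_alpha \<noteq> 0\<close> \<open>phi_beta \<noteq> 0\<close> phi_alpha_times_phi_beta
    by (simp_all add: field_simps)
  have shift: "z powi (s + 1) = z powi s * z" "z powi (s - 1) = z powi s * (1 / z)"
    if "z \<noteq> 0" for z :: real
    using that by (simp_all add: power_int_add power_int_diff)
  have powers: "phi_alpha powi (s + 1) = phi_alpha powi s * phi_alpha"
    "phi_beta powi (s + 1) = phi_beta powi s * phi_beta"
    "phi_alpha powi (s - 1) = phi_alpha powi s * (- phi_beta)"
    "phi_beta powi (s - 1) = phi_beta powi s * (- phi_alpha)"
    unfolding inverse [symmetric]
    using shift \<open>phi_alpha \<noteq> 0\<close> \<open>phi_beta \<noteq> 0\<close> by blast+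
  have limit_eq: "a * (5 * phi_alpha / 16 * ln 5 - (15 * phi_beta + 1) / 8 * ln phi_alpha - ln 2 - 1 / 2)
      + b * (5 * phi_beta / 16 * ln 5 + (15 * phi_alpha + 1) / 8 * ln phi_alpha - ln 2 - 1 / 2) = l"
    unfolding l u v powers a_def b_def by (simp add: field_simps)
  show ?thesis
    using sums_add [OF sums_mult [OF half_phi_alpha_series, of a] sums_mult [OF half_phi_beta_series, of b]]
    unfolding summand_eq [symmetric] limit_eq .
qed

theorem theorem13:
  fixes s :: int
  shows "(\<lambda>k. lucZ (2 * int (Suc k) + s)
             / (4 ^ Suc k * (2 * real (Suc k) - 1) * (2 * real (Suc k)) * (2 * real (Suc k) + 1)))
         sums (- lucZ s * ln 2 + 5 / 16 * lucZ (s + 1) * ln 5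
               + sqrt 5 / 8 * (15 * fibZ (s - 1) - fibZ s) * ln phi_alpha - lucZ s / 2)
       \<and> (\<lambda>k. fibZ (2 * int (Suc k) + s)
             / (4 ^ Suc k * (2 * real (Suc k) - 1) * (2 * real (Suc k)) * (2 * real (Suc k) + 1)))
         sums (- fibZ s * ln 2 + 5 / 16 * fibZ (s + 1) * ln 5
               + 1 / (8 * sqrt 5) * (15 * lucZ (s - 1) - lucZ s) * ln phi_alpha - fibZ s / 2)"
proof (rule conjI, goal_cases lucas fibonacci)
  case lucas
  show ?case
  proof (rule binet_form_series [where c = 1 and d = 1 and v = "\<lambda>n. sqrt 5 * fibZ n"])
    show "lucZ n = 1 * phi_alpha powi n + 1 * phi_beta powi n" for n
      by (simp add: lucZ_def)
    show "sqrt 5 * fibZ n = 1 * phi_alpha powi n - 1 * phi_beta powi n" for n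
      by (simp add: fibZ_def phi_alpha_minus_phi_beta)
  qed (simp add: field_simps)
next
  case fibonacci
  show ?case
  proof (rule binet_form_series [where c = "1 / sqrt 5" and d = "- 1 / sqrt 5" and v = "\<lambda>n. lucZ n / sqrt 5"])
    show "fibZ n = 1 / sqrt 5 * phi_alpha powi n + - 1 / sqrt 5 * phi_beta powi n" for n
      by (simp add: fibZ_def phi_alpha_minus_phi_beta diff_divide_distrib)
    show "lucZ n / sqrt 5 = 1 / sqrt 5 * phi_alpha powi n - - 1 / sqrt 5 * phi_beta powi n" for n
      by (simp add: lucZ_def add_divide_distrib)
  qed (simp add: field_simps)
qed

end
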